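(* Let $m\geq 1$ be an integer. For all integers $n\geq 1$ and all real $x\in(0,\pi)$, $$\sum_{k=0}^n \binom{n-k+m}{m}\cos(kx)>m.$$ Moreover, the lower bound $m$ is sharp, i.e. it cannot be replaced by any larger constant (valid for all $n\ge1$, $x\in(0,\pi)$). *)

theory Defs
  imports "HOL-Analysis.Analysis"
begin

end

theory Submission
  imports Defs
begin

text \<open>
  Let S m n x denote the sum in the theorem. Pascal's rule gives
  S (m+1) (n+1) = S (m+1) n + S m (n+1) and S m 0 = 1, so S (m+1) is the sequence of
  partial sums of S m. For m = 1 one has 2 S 1 n = n + 1 + |sum_(j=0..n) e^(ijx)|^2
  (the Fejer kernel identity), hence S 1 n > 1 for n \<ge> 2, while S 1 1 = 2 + cos x > 1
  on (0, pi).
  Sharpness: S m 1 = m + 1 + cos x tends to m as x tends to pi.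
\<close>

definition binomial_cos_sum :: "nat \<Rightarrow> nat \<Rightarrow> real \<Rightarrow> real" where
  "binomial_cos_sum m n x = (\<Sum>k=0..n. real ((n - k + m) choose m) * cos (real k * x))"

lemma binomial_cos_sum_0_right [simp]: "binomial_cos_sum m 0 x = 1"
  by (simp add: binomial_cos_sum_def)

lemma binomial_cos_sum_1_right: "binomial_cos_sum m 1 x = real m + 1 + cos x"
  by (simp add: binomial_cos_sum_def)

lemma binomial_cos_sum_Suc_Suc:
  "binomial_cos_sum (Suc m) (Suc n) x = binomial_cos_sum (Suc m) n x + binomial_cos_sum m (Suc n) x"
proof -
  have pascal: "real ((Suc n - k + Suc m) choose Suc m)
      = real ((n - k + Suc m) choose Suc m) + real ((Suc n - k + m) choose m)" if "k \<le> n" for k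
  proof -
    have "Suc n - k + Suc m = Suc (n - k + Suc m)" "Suc n - k + m = n - k + Suc m"
      using that by simp_all
    then show ?thesis by (simp add: binomial_Suc_Suc)
  qed
  have "binomial_cos_sum (Suc m) (Suc n) x
      = (\<Sum>k=0..n. real ((Suc n - k + Suc m) choose Suc m) * cos (real k * x)) + cos (real (Suc n) * x)"
    by (simp add: binomial_cos_sum_def)
  also have "\<dots> = binomial_cos_sum (Suc m) n x
      + ((\<Sum>k=0..n. real ((Suc n - k + m) choose m) * cos (real k * x)) + cos (real (Suc n) * x))"
  proof -
    have "(\<Sum>k=0..n. real ((Suc n - k + Suc m) choose Suc m) * cos (real k * x))
        = (\<Sum>k=0..n. real ((n - k + Suc m) choose Suc m) * cos (real k * x)
                      + real ((Suc n - k + m) choose m) * cos (real k * x))"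
      by (intro sum.cong refl) (metis atLeastAtMost_iff distrib_right pascal)
    then show ?thesis
      by (simp add: binomial_cos_sum_def sum.distrib)
  qed
  also have "\<dots> = binomial_cos_sum (Suc m) n x + binomial_cos_sum m (Suc n) x"
    by (simp add: binomial_cos_sum_def)
  finally show ?thesis .
qed

lemma sum_cos_reflect:
  "(\<Sum>j=0..n. cos (real (Suc n) * x - real j * x)) = (\<Sum>k=0..n. cos (real (Suc k) * x))"
proof -
  have "(\<Sum>j=0..n. cos (real (Suc n) * x - real j * x)) = (\<Sum>j=0..n. cos (real (Suc (n - j)) * x))"
    by (rule sum.cong) (auto simp: of_nat_diff algebra_simps)
  also have "\<dots> = (\<Sum>k=0..n. cos (real (Suc k) * x))"
    using sum.atLeastAtMost_rev[of "\<lambda>k. cos (real (Suc k) * x)" 0 n] by simp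
  finally show ?thesis .
qed

lemma binomial_cos_sum_1_sum_squares:
  "2 * binomial_cos_sum 1 n x
     = real (Suc n) + (\<Sum>j=0..n. cos (real j * x))\<^sup>2 + (\<Sum>j=0..n. sin (real j * x))\<^sup>2"
proof (induction n)
  case 0
  then show ?case by (simp add: binomial_cos_sum_def)
next
  case (Suc n)
  let ?A = "\<Sum>j=0..n. cos (real j * x)"
  let ?B = "\<Sum>j=0..n. sin (real j * x)"
  let ?c = "cos (real (Suc n) * x)"
  let ?s = "sin (real (Suc n) * x)"
  have cross: "?A * ?c + ?B * ?s = (\<Sum>k=0..n. cos (real (Suc k) * x))"
  proof -
    have "?A * ?c + ?B * ?s = (\<Sum>j=0..n. cos (real j * x) * ?c + sin (real j * x) * ?s)"
      by (simp add: sum_distrib_right sum.distrib)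
    also have "\<dots> = (\<Sum>j=0..n. cos (real (Suc n) * x - real j * x))"
      by (simp add: cos_diff mult.commute)
    finally show ?thesis by (simp only: sum_cos_reflect)
  qed
  have "binomial_cos_sum 1 (Suc n) x = binomial_cos_sum 1 n x + binomial_cos_sum 0 (Suc n) x"
    using binomial_cos_sum_Suc_Suc[of 0 n x] by simp
  moreover have "binomial_cos_sum 0 (Suc n) x = 1 + (\<Sum>k=0..n. cos (real (Suc k) * x))"
    unfolding binomial_cos_sum_def by (subst sum.atLeast0_atMost_Suc_shift) simp
  moreover have "(?A + ?c)\<^sup>2 + (?B + ?s)\<^sup>2 = ?A\<^sup>2 + ?B\<^sup>2 + 2 * (?A * ?c + ?B * ?s) + (?c\<^sup>2 + ?s\<^sup>2)"
    by (simp add: power2_eq_square algebra_simps)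
  moreover have "?c\<^sup>2 + ?s\<^sup>2 = 1"
    by (simp add: sin_cos_squared_add2 add.commute)
  ultimately show ?case
    using Suc.IH cross by simp
qed

lemma binomial_cos_sum_1_gt_1:
  assumes "n \<ge> 1" "0 < x" "x < pi"
  shows "binomial_cos_sum 1 n x > 1"
proof (cases "n = 1")
  case True
  have "cos x > -1"
    using cos_monotone_0_pi[of x pi] assms by simp
  with True show ?thesis using binomial_cos_sum_1_right[of 1 x] by simp
next
  case False
  with assms have "n \<ge> 2" by simp
  moreover have "2 * binomial_cos_sum 1 n x \<ge> real (Suc n)"
    using binomial_cos_sum_1_sum_squares[of n x] by simp
  ultimately show ?thesis by simp
qed

lemma binomial_cos_sum_gt:
  assumes "m \<ge> 1" "n \<ge> 1" "0 < x" "x < pi"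
  shows "binomial_cos_sum m n x > real m"
  using assms
proof (induction m arbitrary: n rule: nat_induct_at_least)
  case base
  then show ?case using binomial_cos_sum_1_gt_1 by simp
next
  case (Suc m)
  note IH_m = Suc.IH
  show ?case using \<open>n \<ge> 1\<close>
  proof (induction n rule: nat_induct_at_least)
    case base
    have "binomial_cos_sum (Suc m) 1 x = 1 + binomial_cos_sum m 1 x"
      using binomial_cos_sum_Suc_Suc[of m 0 x] by simp
    with IH_m[of 1] Suc.prems show ?case by simp
  next
    case (Suc n)
    have "binomial_cos_sum m (Suc n) x > real m"
      using Suc.prems \<open>0 < x\<close> \<open>x < pi\<close> by (intro IH_m) auto
    with Suc.IH \<open>m \<ge> 1\<close> show ?case
      by (simp add: binomial_cos_sum_Suc_Suc)
  qed
qed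

lemma binomial_cos_sum_1_tendsto: "(binomial_cos_sum m 1 \<longlongrightarrow> real m) (at_left pi)"
proof -
  have "((\<lambda>x. real m + 1 + cos x) \<longlongrightarrow> real m + 1 + cos pi) (at_left pi)"
    by (intro tendsto_intros)
  moreover have "binomial_cos_sum m 1 = (\<lambda>x. real m + 1 + cos x)"
    using binomial_cos_sum_1_right by blast
  ultimately show ?thesis
    by simp
qed

theorem theorem1:
  fixes m :: nat
  assumes "m \<ge> 1"
  shows "(\<forall>n::nat. \<forall>x::real. n \<ge> 1 \<longrightarrow> 0 < x \<longrightarrow> x < pi \<longrightarrow>
            (\<Sum>k=0..n. real ((n - k + m) choose m) * cos (real k * x)) > real m)
       \<and> (\<forall>c::real. c > real m \<longrightarrow>
            (\<exists>n::nat. \<exists>x::real. n \<ge> 1 \<and> 0 < x \<and> x < pi \<and>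
              (\<Sum>k=0..n. real ((n - k + m) choose m) * cos (real k * x)) < c))"
proof (intro conjI allI impI)
  fix n :: nat and x :: real
  assume "n \<ge> 1" "0 < x" "x < pi"
  then show "(\<Sum>k=0..n. real ((n - k + m) choose m) * cos (real k * x)) > real m"
    using binomial_cos_sum_gt[OF assms] unfolding binomial_cos_sum_def by blast
next
  fix c :: real
  assume "c > real m"
  then have "\<forall>\<^sub>F x in at_left pi. binomial_cos_sum m 1 x < c"
    by (rule order_tendstoD(2)[OF binomial_cos_sum_1_tendsto])
  with eventually_at_left_real[OF pi_gt_zero]
  have "\<forall>\<^sub>F x in at_left pi. x \<in> {0<..<pi} \<and> binomial_cos_sum m 1 x < c"
    by (rule eventually_conj)
  then obtain x where "0 < x" "x < pi" "binomial_cos_sum m 1 x < c"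
    using eventually_happens'[OF trivial_limit_at_left_real] by auto
  then show "\<exists>n::nat. \<exists>x::real. n \<ge> 1 \<and> 0 < x \<and> x < pi \<and>
              (\<Sum>k=0..n. real ((n - k + m) choose m) * cos (real k * x)) < c"
    unfolding binomial_cos_sum_def by (intro exI[of _ 1] exI[of _ x]) auto
qed

end
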